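(* $A_4(\frac15,\frac15,\frac15,\frac15,\frac15)$ has a unique rational solution of Type C, namely $(f_0,f_1,f_2,f_3,f_4)=(\frac t5,\frac t5,\frac t5,\frac t5,\frac t5)$.
   Context: The $A_4^{(1)}$ Painlevé equation $A_4(\alpha_0,\dots,\alpha_4)$ is the system for five functions $f_0,\dots,f_4$ of $t$ (indices in $\mathbb{Z}/5\mathbb{Z}$, ${}'=d/dt$): $f_j'=f_j(f_{j+1}-f_{j+2}+f_{j+3}-f_{j+4})+\alpha_j$ ($j=0,\dots,4$), $f_0+\dots+f_4=t$. A rational solution is a tuple of rational functions satisfying it. It is of Type C if all of $f_0,\dots,f_4$ have a pole at $t=\infty$. *)

theory Defs
  imports Complex_Main "HOL-Computational_Algebra.Computational_Algebra"
    "HOL-Computational_Algebra.Normalized_Fraction" "HOL-Computational_Algebra.Field_as_Ring"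
begin

type_synonym ratfun = "complex poly fract"

definition rf_t :: ratfun where
  "rf_t = to_fract [:0, 1:]"

definition rf_const :: "complex \<Rightarrow> ratfun" where
  "rf_const c = to_fract [:c:]"

definition rf_deriv :: "ratfun \<Rightarrow> ratfun" where
  "rf_deriv x = (case quot_of_fract x of (p, q) \<Rightarrow>
      Fract (pderiv p * q - p * pderiv q) (q * q))"

definition rf_pole_at_infinity :: "ratfun \<Rightarrow> bool" where
  "rf_pole_at_infinity x = (case quot_of_fract x of (p, q) \<Rightarrow> degree q < degree p)"

definition A4_rational_solution :: "(nat \<Rightarrow> complex) \<Rightarrow> (nat \<Rightarrow> ratfun) \<Rightarrow> bool" where
  "A4_rational_solution \<alpha> f \<longleftrightarrow>
     (\<forall>j<5. rf_deriv (f j) =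
        f j * (f ((j+1) mod 5) - f ((j+2) mod 5) + f ((j+3) mod 5) - f ((j+4) mod 5))
        + rf_const (\<alpha> j))
     \<and> (\<Sum>j<5. f j) = rf_t"

definition A4_typeC :: "(nat \<Rightarrow> ratfun) \<Rightarrow> bool" where
  "A4_typeC f \<longleftrightarrow> (\<forall>j<5. rf_pole_at_infinity (f j))"

end

theory Submission
  imports Defs
begin

text \<open>Write f_j = t/5 + g_j. The g_j sum to zero and satisfy g_j' = f_j h_j, where h_j is the
  alternating sum of g_(j+1), ..., g_(j+4); on zero-sum families this alternating sum can be inverted,
  so every g_j is a constant linear combination of the h_i. Measure rational functions by their degree
  at infinity: since f_j has a pole there and differentiation lowers the degree, deg h_j \<le> deg g_j - 2.
  So any common degree bound for the g_j improves by 2, which is only possible if all g_j vanish.\<close>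

lemma Fract_nonzero_cases:
  fixes x :: "'a::idom fract"
  assumes "x \<noteq> 0"
  obtains p q where "x = Fract p q" "p \<noteq> 0" "q \<noteq> 0"
proof (cases x)
  case (Fract p q)
  with assms have "p \<noteq> 0" by (auto simp: Zero_fract_def eq_fract)
  with Fract that show ?thesis by blast
qed

lemma rf_deriv_Fract:
  assumes "q \<noteq> 0"
  shows "rf_deriv (Fract p q) = Fract (pderiv p * q - p * pderiv q) (q * q)"
proof -
  obtain a b where ab: "quot_of_fract (Fract p q) = (a, b)"
    by (cases "quot_of_fract (Fract p q)")
  have b: "b \<noteq> 0" using snd_quot_of_fract_nonzero[of "Fract p q"] ab by simp
  have "Fract a b = Fract p q" using Fract_quot_of_fract[of "Fract p q"] ab by simp
  hence cross: "a * q = p * b" using b assms by (simp add: eq_fract)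
  hence "pderiv (a * q) = pderiv (p * b)" by simp
  hence "pderiv a * q + a * pderiv q = pderiv p * b + p * pderiv b"
    by (simp add: pderiv_mult algebra_simps)
  with cross have "(pderiv a * b - a * pderiv b) * (q * q) = (pderiv p * q - p * pderiv q) * (b * b)"
    by algebra
  thus ?thesis unfolding rf_deriv_def ab using b assms by (simp add: eq_fract)
qed

lemma rf_deriv_0 [simp]: "rf_deriv 0 = 0"
  using rf_deriv_Fract[of 1 0] by (simp add: Zero_fract_def eq_fract)

lemma rf_deriv_add: "rf_deriv (x + y) = rf_deriv x + rf_deriv y"
proof (cases x)
  case (Fract a b)
  show ?thesis
  proof (cases y)
    case (Fract c d)
    with \<open>x = Fract a b\<close> \<open>b \<noteq> 0\<close> show ?thesis
      by (simp add: rf_deriv_Fract eq_fract pderiv_mult pderiv_add algebra_simps)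
  qed
qed

lemma rf_const_mult: "rf_const (a * b) = rf_const a * rf_const b"
  by (simp add: rf_const_def flip: to_fract_mult)

lemma rf_const_numeral: "rf_const (numeral m) = numeral m"
  unfolding rf_const_def by (metis of_nat_numeral of_nat_poly to_fract_def Fract_of_nat_eq)

lemma numeral_times_rf_const_inverse: "numeral m * rf_const (1 / numeral m) = 1"
proof -
  have "numeral m * rf_const (1 / numeral m) = rf_const (numeral m * (1 / numeral m))"
    by (simp only: rf_const_mult rf_const_numeral)
  also have "\<dots> = 1" by (simp add: rf_const_def flip: one_pCons)
  finally show ?thesis .
qed

definition rf_degree :: "ratfun \<Rightarrow> int" where
  "rf_degree x = int (degree (fst (quot_of_fract x))) - int (degree (snd (quot_of_fract x)))"

lemma rf_degree_Fract:
  assumes "p \<noteq> 0" "q \<noteq> 0"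
  shows "rf_degree (Fract p q) = int (degree p) - int (degree q)"
proof -
  obtain a b where ab: "quot_of_fract (Fract p q) = (a, b)"
    by (cases "quot_of_fract (Fract p q)")
  have b: "b \<noteq> 0" using snd_quot_of_fract_nonzero[of "Fract p q"] ab by simp
  have "Fract a b = Fract p q" using Fract_quot_of_fract[of "Fract p q"] ab by simp
  hence cross: "a * q = p * b" using b assms by (simp add: eq_fract)
  hence "a \<noteq> 0" using assms b by auto
  with cross b assms have "degree a + degree q = degree p + degree b"
    by (metis degree_mult_eq)
  thus ?thesis unfolding rf_degree_def ab by simp
qed

lemma rf_degree_const: "c \<noteq> 0 \<Longrightarrow> rf_degree (rf_const c) = 0"
  unfolding rf_const_def rf_degree_def by simp

lemma rf_degree_uminus [simp]: "rf_degree (- x) = rf_degree x"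
proof (cases "x = 0")
  case False
  then obtain p q where "x = Fract p q" "p \<noteq> 0" "q \<noteq> 0" by (rule Fract_nonzero_cases)
  thus ?thesis by (simp add: rf_degree_Fract)
qed simp

lemma rf_degree_mult:
  assumes "x \<noteq> 0" "y \<noteq> 0"
  shows "rf_degree (x * y) = rf_degree x + rf_degree y"
proof -
  obtain a b where "x = Fract a b" "a \<noteq> 0" "b \<noteq> 0" using assms(1) by (rule Fract_nonzero_cases)
  moreover obtain c d where "y = Fract c d" "c \<noteq> 0" "d \<noteq> 0" using assms(2) by (rule Fract_nonzero_cases)
  ultimately show ?thesis by (simp add: rf_degree_Fract degree_mult_eq)
qed

lemma rf_degree_add_le:
  assumes "x \<noteq> 0" "y \<noteq> 0" "x + y \<noteq> 0"
  shows "rf_degree (x + y) \<le> max (rf_degree x) (rf_degree y)"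
proof -
  obtain a b where x: "x = Fract a b" "a \<noteq> 0" "b \<noteq> 0" using assms(1) by (rule Fract_nonzero_cases)
  obtain c d where y: "y = Fract c d" "c \<noteq> 0" "d \<noteq> 0" using assms(2) by (rule Fract_nonzero_cases)
  have sum: "x + y = Fract (a * d + c * b) (b * d)" using x y by simp
  hence "a * d + c * b \<noteq> 0" using assms(3) by (auto simp: Zero_fract_def eq_fract)
  moreover have "degree (a * d + c * b) \<le> max (degree a + degree d) (degree c + degree b)"
    using degree_add_le_max[of "a * d" "c * b"] x y by (simp add: degree_mult_eq)
  ultimately show ?thesis using sum x y by (simp add: rf_degree_Fract degree_mult_eq)
qed

lemma rf_degree_deriv_le:
  assumes "rf_deriv x \<noteq> 0"
  shows "rf_degree (rf_deriv x) \<le> rf_degree x - 1"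
proof -
  have "x \<noteq> 0" using assms by auto
  then obtain p q where x: "x = Fract p q" "p \<noteq> 0" "q \<noteq> 0" by (rule Fract_nonzero_cases)
  define N where "N = pderiv p * q - p * pderiv q"
  have dx: "rf_deriv x = Fract N (q * q)" using x rf_deriv_Fract N_def by simp
  hence N: "N \<noteq> 0" using assms by (auto simp: Zero_fract_def eq_fract)
  have N_le: "degree N \<le> max (degree (pderiv p * q)) (degree (p * pderiv q))"
    unfolding N_def by (rule degree_diff_le_max)
  have pderiv_deg: "pderiv r \<noteq> 0 \<Longrightarrow> degree (pderiv r) + 1 = degree r" for r :: "complex poly"
    by (auto simp: degree_pderiv pderiv_eq_0_iff)
  have "degree N + 1 \<le> degree p + degree q"
    using N N_le x pderiv_deg[of p] pderiv_deg[of q] unfolding N_def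
    by (cases "pderiv p = 0"; cases "pderiv q = 0"; simp add: degree_mult_eq)
  thus ?thesis using dx N x by (simp add: rf_degree_Fract degree_mult_eq)
qed

lemma rf_pole_at_infinity_iff: "rf_pole_at_infinity x \<longleftrightarrow> x \<noteq> 0 \<and> rf_degree x \<ge> 1"
  unfolding rf_pole_at_infinity_def rf_degree_def
  by (cases "quot_of_fract x")
     (auto simp del: fst_quot_of_fract_eq_0_iff simp: fst_quot_of_fract_eq_0_iff[symmetric])

lemma rf_deriv_const_mult_t: "rf_deriv (rf_const c * rf_t) = rf_const c"
proof -
  have "rf_const c * rf_t = Fract [:0, c:] 1"
    unfolding rf_const_def rf_t_def to_fract_def by simp
  thus ?thesis
    using rf_deriv_Fract[of 1 "[:0, c:]"] unfolding rf_const_def to_fract_def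
    by (simp add: pderiv_pCons)
qed

lemma rf_pole_at_infinity_const_mult_t: "c \<noteq> 0 \<Longrightarrow> rf_pole_at_infinity (rf_const c * rf_t)"
  unfolding rf_pole_at_infinity_def rf_const_def rf_t_def by (simp flip: to_fract_mult)

text \<open>rf_degree 0 = 0 is a junk value; here 0 satisfies every degree bound.\<close>
definition rf_degree_le :: "int \<Rightarrow> ratfun \<Rightarrow> bool" where
  "rf_degree_le n x \<longleftrightarrow> x = 0 \<or> rf_degree x \<le> n"

lemma rf_degree_le_mono: "rf_degree_le n x \<Longrightarrow> n \<le> m \<Longrightarrow> rf_degree_le m x"
  unfolding rf_degree_le_def by auto

lemma rf_degree_le_self: "rf_degree_le (rf_degree x) x"
  unfolding rf_degree_le_def by simp

lemma eq_0_if_all_rf_degree_le: "(\<And>n. rf_degree_le n x) \<Longrightarrow> x = 0"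
  unfolding rf_degree_le_def by (metis lt_ex not_le)

lemma rf_degree_le_add: "rf_degree_le n x \<Longrightarrow> rf_degree_le n y \<Longrightarrow> rf_degree_le n (x + y)"
  unfolding rf_degree_le_def using rf_degree_add_le[of x y] by fastforce

lemma rf_degree_le_uminus: "rf_degree_le n x \<Longrightarrow> rf_degree_le n (- x)"
  unfolding rf_degree_le_def by simp

lemma rf_degree_le_mult:
  "rf_degree_le n x \<Longrightarrow> rf_degree_le m y \<Longrightarrow> rf_degree_le (n + m) (x * y)"
  unfolding rf_degree_le_def by (cases "x = 0 \<or> y = 0") (auto simp: rf_degree_mult)

lemma rf_degree_le_const: "rf_degree_le 0 (rf_const c)"
  unfolding rf_degree_le_def using rf_degree_const[of c] by (cases "c = 0") (auto simp: rf_const_def)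

lemma rf_degree_le_const_mult: "rf_degree_le n x \<Longrightarrow> rf_degree_le n (rf_const c * x)"
  using rf_degree_le_mult[OF rf_degree_le_const] by fastforce

lemma rf_degree_le_numeral_mult: "rf_degree_le n x \<Longrightarrow> rf_degree_le n (numeral m * x)"
  using rf_degree_le_const_mult[of n x "numeral m"] by (simp add: rf_const_numeral)

lemma rf_degree_le_of_deriv_eq_mult:
  assumes deriv: "rf_deriv g = f * h" and pole: "rf_pole_at_infinity f"
    and bound: "rf_degree_le n g"
  shows "rf_degree_le (n - 2) h"
proof (cases "h = 0")
  case False
  have f: "f \<noteq> 0" "rf_degree f \<ge> 1" using pole by (auto simp: rf_pole_at_infinity_iff)
  hence "rf_deriv g \<noteq> 0" using deriv False by simp
  hence "g \<noteq> 0" by auto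
  have "rf_degree f + rf_degree h = rf_degree (rf_deriv g)"
    using deriv rf_degree_mult[OF f(1) False] by simp
  also have "\<dots> \<le> rf_degree g - 1" using \<open>rf_deriv g \<noteq> 0\<close> by (rule rf_degree_deriv_le)
  also have "\<dots> \<le> n - 1" using bound \<open>g \<noteq> 0\<close> by (simp add: rf_degree_le_def)
  finally show ?thesis using f by (simp add: rf_degree_le_def)
qed (simp add: rf_degree_le_def)

definition alt_sum :: "(nat \<Rightarrow> 'a::ab_group_add) \<Rightarrow> nat \<Rightarrow> 'a" where
  "alt_sum g j = g ((j + 1) mod 5) - g ((j + 2) mod 5) + g ((j + 3) mod 5) - g ((j + 4) mod 5)"

text \<open>On families summing to zero the circulant map g \<mapsto> alt_sum g is invertible
  over any ring in which 5 is a unit; this is its inverse, multiplied by 5.\<close>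
lemma alt_sum_inversion:
  fixes g :: "nat \<Rightarrow> 'a::comm_ring_1"
  assumes sum: "(\<Sum>j<5. g j) = 0" and "j < 5"
  shows "5 * g j = - (4 * alt_sum g j + 7 * alt_sum g ((j + 1) mod 5)
    + 5 * alt_sum g ((j + 2) mod 5) + 3 * alt_sum g ((j + 3) mod 5) + alt_sum g ((j + 4) mod 5))"
proof -
  have g4: "g 4 = - (g 0 + g 1 + g 2 + g 3)"
    using sum by (simp add: eval_nat_numeral algebra_simps eq_neg_iff_add_eq_0)
  have "j = 0 \<or> j = 1 \<or> j = 2 \<or> j = 3 \<or> j = 4" using \<open>j < 5\<close> by auto
  thus ?thesis
    by (elim disjE) (simp_all add: alt_sum_def g4 algebra_simps numeral_2_eq_2)
qed

lemma eq_0_if_deriv_eq_pole_mult_alt_sum: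
  fixes f g :: "nat \<Rightarrow> ratfun"
  assumes sum: "(\<Sum>j<5. g j) = 0"
    and pole: "\<And>j. j < 5 \<Longrightarrow> rf_pole_at_infinity (f j)"
    and deriv: "\<And>j. j < 5 \<Longrightarrow> rf_deriv (g j) = f j * alt_sum g j"
    and "j < 5"
  shows "g j = 0"
proof -
  define P where "P n \<longleftrightarrow> (\<forall>j<5. rf_degree_le n (g j))" for n
  have P_mono: "P m" if "P n" "n \<le> m" for n m
    using that rf_degree_le_mono unfolding P_def by blast
  have descent: "P (n - 2)" if "P n" for n
  proof -
    have alt: "rf_degree_le (n - 2) (alt_sum g i)" if "i < 5" for i
      using rf_degree_le_of_deriv_eq_mult[OF deriv pole] \<open>P n\<close> \<open>i < 5\<close> unfolding P_def by blast
    have "rf_degree_le (n - 2) (rf_const (1/5) * (5 * g j))" if "j < 5" for j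
      unfolding alt_sum_inversion[OF sum \<open>j < 5\<close>]
      by (intro rf_degree_le_const_mult rf_degree_le_uminus rf_degree_le_add
          rf_degree_le_numeral_mult alt; simp add: \<open>j < 5\<close>)
    moreover have "rf_const (1/5) * (5 * x) = x" for x :: ratfun
      by (metis numeral_times_rf_const_inverse mult.assoc mult.commute mult_1)
    ultimately show ?thesis unfolding P_def by simp
  qed
  define n0 where "n0 = (\<Sum>j<5. \<bar>rf_degree (g j)\<bar>)"
  have "P n0"
    unfolding P_def
  proof (intro allI impI)
    fix j :: nat assume "j < 5"
    hence "rf_degree (g j) \<le> n0"
      unfolding n0_def using member_le_sum[of j "{..<5}" "\<lambda>j. \<bar>rf_degree (g j)\<bar>"] by auto
    thus "rf_degree_le n0 (g j)" using rf_degree_le_self rf_degree_le_mono by blast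
  qed
  have "P n" for n
  proof -
    have "P (min n n0)"
      using min.cobounded2 \<open>P n0\<close>
    proof (induction rule: int_le_induct)
      case (step i)
      thus ?case using descent P_mono[of "i - 2" "i - 1"] by simp
    qed
    thus ?thesis using P_mono by simp
  qed
  thus ?thesis using \<open>j < 5\<close> eq_0_if_all_rf_degree_le unfolding P_def by blast
qed

lemma sum_five_t_div_5: "(\<Sum>j::nat<5. rf_const (1/5) * rf_t) = rf_t"
  by (simp add: mult.assoc [symmetric] numeral_times_rf_const_inverse)

theorem lemma3p7:
  fixes f :: "nat \<Rightarrow> ratfun"
  shows "(A4_rational_solution (\<lambda>_. 1/5) f \<and> A4_typeC f) \<longleftrightarrow>
         (\<forall>j<5. f j = rf_const (1/5) * rf_t)"
proof
  assume sol: "A4_rational_solution (\<lambda>_. 1/5) f \<and> A4_typeC f"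
  define g where "g j = f j - rf_const (1/5) * rf_t" for j
  have "(\<Sum>j<5. g j) = 0"
    using sol sum_five_t_div_5 by (simp add: g_def A4_rational_solution_def sum_subtractf)
  moreover have "rf_deriv (g j) = f j * alt_sum g j" if "j < 5" for j
  proof -
    have "rf_deriv (f j) = rf_deriv (g j) + rf_const (1/5)"
      using rf_deriv_add[of "g j" "rf_const (1/5) * rf_t"] by (simp add: g_def rf_deriv_const_mult_t)
    moreover have "alt_sum g j = alt_sum f j" by (simp add: alt_sum_def g_def)
    ultimately show ?thesis using sol \<open>j < 5\<close> by (simp add: A4_rational_solution_def alt_sum_def)
  qed
  moreover have "\<And>j. j < 5 \<Longrightarrow> rf_pole_at_infinity (f j)" using sol by (simp add: A4_typeC_def)
  ultimately have "g j = 0" if "j < 5" for j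
    using eq_0_if_deriv_eq_pole_mult_alt_sum that by blast
  thus "\<forall>j<5. f j = rf_const (1/5) * rf_t" by (simp add: g_def)
next
  assume f: "\<forall>j<5. f j = rf_const (1/5) * rf_t"
  hence "f (i mod 5) = rf_const (1/5) * rf_t" for i by simp
  moreover have "(\<Sum>j<5. f j) = rf_t" using f sum_five_t_div_5 by simp
  ultimately show "A4_rational_solution (\<lambda>_. 1/5) f \<and> A4_typeC f"
    using f unfolding A4_rational_solution_def A4_typeC_def
    by (simp add: rf_deriv_const_mult_t rf_pole_at_infinity_const_mult_t)
qed

end
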